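(* For every $\varepsilon>0$ there exists $N\in\omega$ such that for every $n\geq N$ there is a set $A\subseteq 2^n$ with $\frac{|A|}{2^n}<\varepsilon$ having the following property: for every $u\subseteq n$ with $\frac{n}{4}\leq |u|\leq \frac{3n}{4}$, and all $B_0\subseteq 2^u$ and $B_1\subseteq 2^{n\setminus u}$ with $\frac{|B_0|}{2^{|u|}}\geq \frac12$ and $\frac{|B_1|}{2^{|n\setminus u|}}\geq\frac12$, we have $(B_0\times B_1)\cap A\neq\emptyset$.
   Context: Here $n=\{0,1,\dots,n-1\}$ and $2^a$ denotes the set of functions from $a$ to $\{0,1\}$. The product $B_0\times B_1$ is identified with the set of $s\in 2^n$ such that $s\restriction u\in B_0$ and $s\restriction (n\setminus u)\in B_1$. *)

theory Defs
  imports Complex_Main "HOL-Library.FuncSet"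
begin

text \<open>The set 2^a of functions from a to {0,1}, represented as extensional
  functions a \<rightarrow> bool (undefined outside a).\<close>
definition cube :: "nat set \<Rightarrow> (nat \<Rightarrow> bool) set" where
  "cube a = (a \<rightarrow>\<^sub>E (UNIV :: bool set))"

text \<open>B0 \<times> B1 as a subset of 2^n, for u \<subseteq> n.\<close>
definition box_prod :: "nat \<Rightarrow> nat set \<Rightarrow> (nat \<Rightarrow> bool) set \<Rightarrow> (nat \<Rightarrow> bool) set \<Rightarrow> (nat \<Rightarrow> bool) set" where
  "box_prod n u B0 B1 = {s \<in> cube {..<n}. restrict s u \<in> B0 \<and> restrict s ({..<n} - u) \<in> B1}"

end

theory Submission
  imports Defs "HOL-Real_Asymp.Real_Asymp"
begin

(* Probabilistic method, with probabilities realised by counting tuples of points.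
  A balanced box B0 \<times> B1 has density at least 1/4 in 2^n, so m points chosen independently
  and uniformly all miss it with probability at most (3/4)^m.  Since |u| and n - |u| are at most
  3n/4, there are at most 2^n * 2^(2 * 2^(3n/4)) balanced boxes.  For m = 2^(n-k) their number
  times (3/4)^m is below 1 once n is large, so some m points hit every balanced box, and the set
  of these points has density at most 2^-k. *)

lemma exists_small_hitting_set:
  fixes X :: "'a set" and \<F> :: "'a set set" and \<delta> :: real
  assumes X: "finite X" "X \<noteq> {}" and \<F>: "\<F> \<subseteq> Pow X"
    and dense: "\<And>Q. Q \<in> \<F> \<Longrightarrow> \<delta> * card X \<le> card Q"
    and few: "card \<F> * (1 - \<delta>) ^ m < 1"
  shows "\<exists>A \<subseteq> X. card A \<le> m \<and> (\<forall>Q\<in>\<F>. Q \<inter> A \<noteq> {})"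
proof -
  define tuples where "tuples = {..<m} \<rightarrow>\<^sub>E X"
  define misses where "misses Q = {..<m} \<rightarrow>\<^sub>E (X - Q)" for Q
  have fin\<F>: "finite \<F>" using finite_subset [OF \<F>] X(1) by simp
  have card_misses: "real (card (misses Q)) \<le> (1 - \<delta>) ^ m * card X ^ m" if "Q \<in> \<F>" for Q
  proof -
    have "Q \<subseteq> X" using that \<F> by blast
    then have "real (card (X - Q)) = real (card X) - real (card Q)"
      using X(1) by (simp add: card_Diff_subset finite_subset card_mono of_nat_diff)
    then have "real (card (X - Q)) \<le> (1 - \<delta>) * card X"
      using dense [OF that] unfolding left_diff_distrib by linarith
    then show ?thesis
      by (simp add: misses_def card_PiE power_mono flip: power_mult_distrib)
  qed
  have "real (card (\<Union>Q\<in>\<F>. misses Q)) \<le> (\<Sum>Q\<in>\<F>. real (card (misses Q)))"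
    using card_UN_le [OF fin\<F>, of misses] by (simp flip: of_nat_sum)
  also have "\<dots> \<le> (\<Sum>Q\<in>\<F>. (1 - \<delta>) ^ m * card X ^ m)"
    by (rule sum_mono) (rule card_misses)
  also have "\<dots> = card \<F> * (1 - \<delta>) ^ m * card X ^ m"
    by simp
  also have "\<dots> < card X ^ m"
    using few X by (simp add: card_gt_0_iff)
  also have "\<dots> = card tuples"
    by (simp add: tuples_def card_PiE)
  finally have "card (\<Union>Q\<in>\<F>. misses Q) < card tuples"
    by linarith
  moreover have "finite (\<Union>Q\<in>\<F>. misses Q)"
    using fin\<F> X by (simp add: misses_def finite_PiE)
  ultimately have "\<not> tuples \<subseteq> (\<Union>Q\<in>\<F>. misses Q)"
    by (meson card_mono leD)
  then obtain t where t: "t \<in> tuples" "\<And>Q. Q \<in> \<F> \<Longrightarrow> t \<notin> misses Q"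
    by blast
  show ?thesis
  proof (intro exI conjI ballI)
    show "t ` {..<m} \<subseteq> X" "card (t ` {..<m}) \<le> m"
      using t(1) card_image_le [of "{..<m}" t] by (auto simp: tuples_def)
    show "Q \<inter> t ` {..<m} \<noteq> {}" if "Q \<in> \<F>" for Q
      using t that by (auto simp: tuples_def misses_def PiE_def Pi_def)
  qed
qed

lemma two_pow_le_two_powr: "real a \<le> x \<Longrightarrow> (2::real) ^ a \<le> 2 powr x"
  by (metis powr_realpow powr_mono one_le_numeral zero_less_numeral)

lemma two_powr_mult_three_quarters_pow_lt_one:
  fixes t :: real
  assumes "0 \<le> t" "3 * t < real m"
  shows "2 powr t * (3/4) ^ m < 1"
proof -
  have "(3/4::real) ^ m = (3/4) powr real m"
    by (simp add: powr_realpow)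
  also have "\<dots> < (3/4) powr (3 * t)"
    using assms(2) by (intro powr_less_mono') auto
  also have "\<dots> = (27/64) powr t"
    unfolding powr_powr [symmetric] by (simp add: powr_numeral power_divide)
  finally have "2 powr t * (3/4::real) ^ m < 2 powr t * (27/64) powr t"
    by simp
  also have "\<dots> = (27/32) powr t"
    by (simp flip: powr_mult)
  also have "\<dots> \<le> 1"
    using assms(1) by (intro powr_le1) auto
  finally show ?thesis .
qed

lemma eventually_linear_plus_double_exp_lt_two_pow:
  fixes c :: real
  assumes "c > 0"
  shows "eventually (\<lambda>n. c * (real n + 2 * 2 powr (3/4 * real n)) < 2 ^ n) sequentially"
proof -
  have "(\<lambda>n. (real n + 2 * 2 powr (3/4 * real n)) / 2 powr real n) \<longlonglongrightarrow> 0"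
    by real_asymp
  from order_tendstoD(2) [OF this, of "1 / c"]
  have "eventually (\<lambda>n. (real n + 2 * 2 powr (3/4 * real n)) / 2 powr real n < 1 / c) sequentially"
    using assms by simp
  then show ?thesis
    by eventually_elim (use assms in \<open>simp add: powr_realpow field_simps\<close>)
qed

lemma finite_cube: "finite a \<Longrightarrow> finite (cube a)"
  by (simp add: cube_def finite_PiE)

lemma card_cube: "finite a \<Longrightarrow> card (cube a) = 2 ^ card a"
  by (simp add: cube_def card_PiE)

lemma card_box_prod:
  assumes u: "u \<subseteq> {..<n}" and B0: "B0 \<subseteq> cube u" and B1: "B1 \<subseteq> cube ({..<n} - u)"
  shows "card (box_prod n u B0 B1) = card B0 * card B1"
proof -
  define merge where "merge = (\<lambda>(a, b) i. if i \<in> u then a i else (b i :: bool))"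
  have restrict_merge: "restrict (merge (a, b)) u = a" "restrict (merge (a, b)) ({..<n} - u) = b"
    if "a \<in> B0" "b \<in> B1" for a b
    using that B0 B1 by (auto simp: merge_def cube_def PiE_def extensional_def fun_eq_iff)
  have "box_prod n u B0 B1 = merge ` (B0 \<times> B1)"
  proof (intro equalityI subsetI)
    fix s assume s: "s \<in> box_prod n u B0 B1"
    then have "s = merge (restrict s u, restrict s ({..<n} - u))"
      by (auto simp: box_prod_def cube_def merge_def PiE_def extensional_def fun_eq_iff)
    with s show "s \<in> merge ` (B0 \<times> B1)" by (auto simp: box_prod_def)
  next
    fix s assume "s \<in> merge ` (B0 \<times> B1)"
    then obtain a b where ab: "a \<in> B0" "b \<in> B1" "s = merge (a, b)" by auto
    then have "s \<in> cube {..<n}"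
      using u B0 B1 by (auto simp: merge_def cube_def PiE_def extensional_def)
    with ab restrict_merge show "s \<in> box_prod n u B0 B1" by (simp add: box_prod_def)
  qed
  moreover have "inj_on merge (B0 \<times> B1)"
    by (rule inj_onI) (metis SigmaE restrict_merge)
  ultimately show ?thesis by (simp add: card_image card_cartesian_product)
qed

definition balanced_boxes :: "nat \<Rightarrow> (nat \<Rightarrow> bool) set set" where
  "balanced_boxes n = {box_prod n u B0 B1 | u B0 B1.
     u \<subseteq> {..<n} \<and> real n / 4 \<le> real (card u) \<and> real (card u) \<le> 3 * real n / 4 \<and>
     B0 \<subseteq> cube u \<and> B1 \<subseteq> cube ({..<n} - u) \<and>
     real (card B0) / 2 ^ card u \<ge> 1/2 \<and> real (card B1) / 2 ^ card ({..<n} - u) \<ge> 1/2}"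

lemma box_prod_mem_balanced_boxes:
  assumes "u \<subseteq> {..<n}" "real n / 4 \<le> real (card u)" "real (card u) \<le> 3 * real n / 4"
    "B0 \<subseteq> cube u" "B1 \<subseteq> cube ({..<n} - u)"
    "real (card B0) / 2 ^ card u \<ge> 1/2" "real (card B1) / 2 ^ card ({..<n} - u) \<ge> 1/2"
  shows "box_prod n u B0 B1 \<in> balanced_boxes n"
  using assms unfolding balanced_boxes_def by blast

lemma balanced_boxes_subset_cube: "balanced_boxes n \<subseteq> Pow (cube {..<n})"
  by (auto simp: balanced_boxes_def box_prod_def)

lemma card_balanced_box_ge:
  assumes "Q \<in> balanced_boxes n"
  shows "1/4 * 2 ^ n \<le> real (card Q)"
proof -
  obtain u B0 B1 where Q: "Q = box_prod n u B0 B1" and u: "u \<subseteq> {..<n}"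
    and B: "B0 \<subseteq> cube u" "B1 \<subseteq> cube ({..<n} - u)"
    and dense: "2 ^ card u \<le> 2 * real (card B0)" "2 ^ card ({..<n} - u) \<le> 2 * real (card B1)"
    using assms by (auto simp: balanced_boxes_def field_simps)
  have "card u \<le> n" using card_mono[OF _ u] by simp
  then have "(2::real) ^ n = 2 ^ card u * 2 ^ card ({..<n} - u)"
    using u by (simp add: card_Diff_subset finite_subset flip: power_add)
  also have "\<dots> \<le> (2 * real (card B0)) * (2 * real (card B1))"
    using dense by (intro mult_mono) auto
  also have "\<dots> = 4 * real (card Q)"
    using card_box_prod[OF u B] by (simp add: Q)
  finally show ?thesis by simp
qed

lemma card_Pow_cube_times_Pow_cube_le:
  assumes "finite u" "finite v" "real (card u) \<le> x" "real (card v) \<le> x"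
  shows "real (card (Pow (cube u) \<times> Pow (cube v))) \<le> 2 powr (2 * 2 powr x)"
proof -
  have "real (2 ^ card u + 2 ^ card v :: nat) \<le> 2 * 2 powr x"
    using add_mono [OF two_pow_le_two_powr [OF assms(3)] two_pow_le_two_powr [OF assms(4)]]
    by simp
  then have "(2::real) ^ (2 ^ card u + 2 ^ card v) \<le> 2 powr (2 * 2 powr x)"
    by (rule two_pow_le_two_powr)
  then show ?thesis
    using assms(1,2) by (simp add: card_cartesian_product card_Pow finite_cube card_cube power_add)
qed

lemma card_balanced_boxes_le:
  "real (card (balanced_boxes n)) \<le> 2 powr (real n + 2 * 2 powr (3/4 * real n))"
proof -
  define U where "U = {u. u \<subseteq> {..<n} \<and> real (card u) \<le> 3/4 * real n \<and>
                          real (card ({..<n} - u)) \<le> 3/4 * real n}"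
  define choices where "choices = (SIGMA u:U. Pow (cube u) \<times> Pow (cube ({..<n} - u)))"
  have finU: "finite U" by (auto simp: U_def)
  have fin_choices: "finite choices"
    unfolding choices_def using finU
    by (intro finite_SigmaI) (auto simp: U_def intro!: finite_cube intro: finite_subset)
  have "balanced_boxes n \<subseteq> (\<lambda>(u, B0, B1). box_prod n u B0 B1) ` choices"
  proof
    fix Q assume "Q \<in> balanced_boxes n"
    then obtain u B0 B1 where "Q = box_prod n u B0 B1" "u \<subseteq> {..<n}"
      "real n / 4 \<le> real (card u)" "real (card u) \<le> 3 * real n / 4"
      "B0 \<subseteq> cube u" "B1 \<subseteq> cube ({..<n} - u)"
      by (auto simp: balanced_boxes_def)
    moreover from this have "real (card ({..<n} - u)) \<le> 3/4 * real n"
      by (simp add: card_Diff_subset finite_subset of_nat_diff card_mono)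
    ultimately show "Q \<in> (\<lambda>(u, B0, B1). box_prod n u B0 B1) ` choices"
      by (force simp: choices_def U_def)
  qed
  then have "card (balanced_boxes n) \<le> card choices"
    using fin_choices by (meson card_image_le card_mono finite_imageI order_trans)
  also have "card choices = (\<Sum>u\<in>U. card (Pow (cube u) \<times> Pow (cube ({..<n} - u))))"
    unfolding choices_def using finU
    by (intro card_SigmaI) (auto simp: U_def intro!: finite_cube intro: finite_subset)
  finally have "real (card (balanced_boxes n))
      \<le> (\<Sum>u\<in>U. real (card (Pow (cube u) \<times> Pow (cube ({..<n} - u)))))"
    by (simp flip: of_nat_sum)
  also have "\<dots> \<le> (\<Sum>u\<in>U. 2 powr (2 * 2 powr (3/4 * real n)))"
  proof (rule sum_mono)
    fix u assume "u \<in> U"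
    then show "real (card (Pow (cube u) \<times> Pow (cube ({..<n} - u))))
        \<le> 2 powr (2 * 2 powr (3/4 * real n))"
      by (intro card_Pow_cube_times_Pow_cube_le) (auto simp: U_def intro: finite_subset)
  qed
  also have "\<dots> = real (card U) * 2 powr (2 * 2 powr (3/4 * real n))"
    by simp
  also have "\<dots> \<le> 2 ^ n * 2 powr (2 * 2 powr (3/4 * real n))"
  proof -
    have "card U \<le> card (Pow {..<n})" by (rule card_mono) (auto simp: U_def)
    then show ?thesis by (simp add: card_Pow)
  qed
  also have "\<dots> = 2 powr (real n + 2 * 2 powr (3/4 * real n))"
    by (simp add: powr_add powr_realpow)
  finally show ?thesis .
qed

lemma exists_sparse_set_hitting_balanced_boxes:
  assumes "k \<le> n" and large: "3 * 2 ^ k * (real n + 2 * 2 powr (3/4 * real n)) < 2 ^ n"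
  shows "\<exists>A \<subseteq> cube {..<n}. real (card A) / 2 ^ n \<le> 1 / 2 ^ k \<and>
           (\<forall>Q\<in>balanced_boxes n. Q \<inter> A \<noteq> {})"
proof -
  define t where "t = real n + 2 * 2 powr (3/4 * real n)"
  define m :: nat where "m = 2 ^ (n - k)"
  have m: "real m = 2 ^ n / 2 ^ k"
    using \<open>k \<le> n\<close> by (simp add: m_def field_simps flip: power_add)
  have "real (card (balanced_boxes n)) * (1 - 1/4) ^ m \<le> 2 powr t * (3/4) ^ m"
    using card_balanced_boxes_le [of n] by (simp add: t_def mult_right_mono)
  also have "\<dots> < 1"
    using large
    by (intro two_powr_mult_three_quarters_pow_lt_one) (simp_all add: t_def m field_simps)
  finally have few: "real (card (balanced_boxes n)) * (1 - 1/4) ^ m < 1" .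
  have "cube {..<n} \<noteq> {}"
    using card_cube [of "{..<n}"] by force
  moreover have "1/4 * real (card (cube {..<n})) \<le> real (card Q)" if "Q \<in> balanced_boxes n" for Q
    using card_balanced_box_ge [OF that] by (simp add: card_cube)
  ultimately obtain A where A: "A \<subseteq> cube {..<n}" "card A \<le> m"
      "\<forall>Q\<in>balanced_boxes n. Q \<inter> A \<noteq> {}"
    using exists_small_hitting_set [OF finite_cube _ balanced_boxes_subset_cube _ few] by blast
  moreover have "real (card A) / 2 ^ n \<le> 1 / 2 ^ k"
  proof -
    have "real (card A) \<le> 2 ^ n / 2 ^ k"
      using of_nat_mono [OF A(2)] m by simp
    then show ?thesis by (simp add: field_simps)
  qed
  ultimately show ?thesis by blast
qed

theorem mainTheorem1:
  fixes \<epsilon> :: real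
  assumes "\<epsilon> > 0"
  shows "\<exists>N::nat. \<forall>n\<ge>N. \<exists>A \<subseteq> cube {..<n}.
           real (card A) / 2 ^ n < \<epsilon> \<and>
           (\<forall>u \<subseteq> {..<n}. real n / 4 \<le> real (card u) \<and> real (card u) \<le> 3 * real n / 4 \<longrightarrow>
              (\<forall>B0 \<subseteq> cube u. \<forall>B1 \<subseteq> cube ({..<n} - u).
                 real (card B0) / 2 ^ card u \<ge> 1/2 \<and> real (card B1) / 2 ^ card ({..<n} - u) \<ge> 1/2 \<longrightarrow>
                 box_prod n u B0 B1 \<inter> A \<noteq> {}))"
proof -
  obtain k :: nat where k: "1 / 2 ^ k < \<epsilon>"
    using real_arch_pow_inv [of \<epsilon> "1/2"] assms by (auto simp: power_one_over)
  obtain N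
    where N: "\<And>n. n \<ge> N \<Longrightarrow> 3 * 2 ^ k * (real n + 2 * 2 powr (3/4 * real n)) < 2 ^ n"
    using eventually_linear_plus_double_exp_lt_two_pow [of "3 * 2 ^ k"]
    by (auto simp: eventually_sequentially)
  have "\<exists>A \<subseteq> cube {..<n}. real (card A) / 2 ^ n < \<epsilon> \<and>
           (\<forall>Q\<in>balanced_boxes n. Q \<inter> A \<noteq> {})" if n: "max N k \<le> n" for n
  proof -
    obtain A where A: "A \<subseteq> cube {..<n}" "real (card A) / 2 ^ n \<le> 1 / 2 ^ k"
      "\<forall>Q\<in>balanced_boxes n. Q \<inter> A \<noteq> {}"
      using exists_sparse_set_hitting_balanced_boxes [of k n] N [of n] n by auto
    with k show ?thesis
      by (intro exI [of _ A]) auto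
  qed
  then show ?thesis
    using box_prod_mem_balanced_boxes by (intro exI [of _ "max N k"] allI impI) meson
qed

end
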